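(* Let $n,m$ be positive integers. The expected number of fixed points of a permutation drawn from the lazy $m$-shelf shuffling distribution $x_m$ on $S_n$ equals $1+2\sum_{k=1}^{(n-1)/2}\frac{1}{(2m+1)^{2k}}$ if $n$ is odd, and $1+2\sum_{k=1}^{n/2-1}\frac{1}{(2m+1)^{2k}}+\frac{1}{(2m+1)^n}$ if $n$ is even.
   Context: $x_m$ is the lazy $m$-shelf shuffling distribution on $S_n$: a deck of cards $1,\ldots,n$ (top to bottom) is processed in order $1,\ldots,n$; each card independently and uniformly chooses one of $2m+1$ options: shelf $0$ (placed below the cards already there), or one of shelves $1,\ldots,m$, placed either on top of or below the cards already there. The piles are then stacked with shelf $0$ on top, then shelf $1$, ..., shelf $m$; $x_m(\pi)$ is the probability that the card in position $i$ from the top is $\pi(i)$ for all $i$. A fixed point of $\pi$ is an $i$ with $\pi(i)=i$. *)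

theory Defs
  imports "HOL-Analysis.Analysis"
begin

text \<open>Options for a card: 0 = shelf 0 (placed below); 2j-1 = shelf j, placed on top;
  2j = shelf j, placed below (1 \<le> j \<le> m). So there are 2m+1 options {0..<2m+1}.\<close>

definition shelf_of :: "nat \<Rightarrow> nat" where
  "shelf_of x = (x + 1) div 2"

definition place :: "(nat \<Rightarrow> nat) \<Rightarrow> nat \<Rightarrow> (nat \<Rightarrow> nat list) \<Rightarrow> (nat \<Rightarrow> nat list)" where
  "place c i piles =
     piles(shelf_of (c i) := (if odd (c i) then i # piles (shelf_of (c i))
                              else piles (shelf_of (c i)) @ [i]))"

definition shelf_deck :: "nat \<Rightarrow> nat \<Rightarrow> (nat \<Rightarrow> nat) \<Rightarrow> nat list" where
  "shelf_deck m n c =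
     (let piles = fold (place c) [1..<Suc n] (\<lambda>_. []) in concat (map piles [0..<Suc m]))"

definition shelf_choices :: "nat \<Rightarrow> nat \<Rightarrow> (nat \<Rightarrow> nat) set" where
  "shelf_choices m n = PiE {1..n} (\<lambda>_. {..<2*m+1})"

definition lazy_shelf :: "nat \<Rightarrow> nat \<Rightarrow> (nat \<Rightarrow> nat) \<Rightarrow> real" where
  "lazy_shelf m n \<pi> =
     real (card {c \<in> shelf_choices m n. shelf_deck m n c = map \<pi> [1..<Suc n]})
     / real (2*m+1) ^ n"

definition fixed_points :: "nat \<Rightarrow> (nat \<Rightarrow> nat) \<Rightarrow> nat" where
  "fixed_points n \<pi> = card {i \<in> {1..n}. \<pi> i = i}"

end

theory Submission
  imports Defs "HOL-Computational_Algebra.Polynomial"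
begin

text \<open>
  Card \<open>i\<close> ends in position \<open>1 + r\<close>, where \<open>r\<close> counts the cards \<open>j \<noteq> i\<close> whose option lies
  below a threshold that depends only on the option \<open>x\<close> of card \<open>i\<close> and on whether \<open>j < i\<close>;
  the two thresholds differ by \<open>(-1)^x\<close>. Given \<open>x\<close>, the other cards choose independently,
  so the generating function of \<open>r\<close> is \<open>A^(i-1) * B^(n-i)\<close> for linear polynomials \<open>A, B\<close>,
  and the number of fixed points is a sum of diagonal coefficients. After the shift
  \<open>Y \<mapsto> Y - 1\<close> the binomial theorem collapses this sum to \<open>\<Sum>d<n. N^(n-1-d) * (-1)^(x*d)\<close>
  with \<open>N = 2m + 1\<close>. Summing over \<open>x\<close> gives the factor \<open>N\<close> for even \<open>d\<close> but only \<open>1\<close> for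
  odd \<open>d\<close>, so each odd term equals the following even one: this is the factor 2 of the formula.
\<close>

section \<open>Sorted lists and permutations\<close>

lemma sorted_wrt_key_less_imp_distinct:
  "sorted_wrt (\<lambda>a b. f a < (f b :: 'b::linorder)) xs \<Longrightarrow> distinct xs"
  by (simp add: sorted_wrt_map [symmetric] strict_sorted_iff distinct_map)

lemma card_key_less_nth:
  assumes "sorted_wrt (\<lambda>a b. f a < (f b :: 'b::linorder)) xs" "k < length xs"
  shows "card {y \<in> set xs. f y < f (xs ! k)} = k"
proof -
  have "distinct xs"
    using assms(1) by (rule sorted_wrt_key_less_imp_distinct)
  have less_iff: "f (xs ! i) < f (xs ! k) \<longleftrightarrow> i < k" if "i < length xs" for i
    using sorted_wrt_nth_less[OF assms(1)] that assms(2)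
    by (metis linorder_neqE_nat order.asym order.irrefl)
  have "{y \<in> set xs. f y < f (xs ! k)} = (!) xs ` {..<k}"
    unfolding set_conv_nth using less_iff assms(2) by force
  moreover have "inj_on ((!) xs) {..<k}"
    using \<open>distinct xs\<close> assms(2) by (simp add: inj_on_def nth_eq_iff_index_eq)
  ultimately show ?thesis
    by (simp add: card_image)
qed

lemma nth_eq_iff_card_key_less:
  assumes "sorted_wrt (\<lambda>a b. f a < (f b :: 'b::linorder)) xs" "k < length xs" "y \<in> set xs"
  shows "xs ! k = y \<longleftrightarrow> card {z \<in> set xs. f z < f y} = k"
proof
  assume "card {z \<in> set xs. f z < f y} = k"
  moreover obtain i where "i < length xs" "xs ! i = y"
    using assms(3) by (auto simp: in_set_conv_nth)
  ultimately show "xs ! k = y"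
    using card_key_less_nth[OF assms(1)] by auto
qed (use card_key_less_nth[OF assms(1,2)] in auto)

lemma permutes_map_upt_eq_singleton:
  assumes "distinct xs" "set xs = {1..n}"
  shows "{\<pi>. \<pi> permutes {1..n} \<and> xs = map \<pi> [1..<Suc n]} =
    {\<lambda>i. if i \<in> {1..n} then xs ! (i - 1) else i}" (is "_ = {?p}")
proof -
  have length: "length xs = n"
    using distinct_card[OF assms(1)] assms(2) by simp
  have nth_map_upt: "map f [1..<Suc n] ! (i - 1) = f i" if "i \<in> {1..n}" for f :: "nat \<Rightarrow> nat" and i
    using that by (cases i) (auto simp del: upt_Suc)
  have map_p: "map ?p [1..<Suc n] = xs"
  proof (rule nth_equalityI)
    fix k
    assume "k < length (map ?p [1..<Suc n])"
    then show "map ?p [1..<Suc n] ! k = xs ! k"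
      using nth_map_upt[of "k + 1" ?p] by (simp del: upt_Suc)
  qed (simp add: length)
  have "inj_on ?p {1..n}"
    using assms(1) distinct_map[of ?p "[1..<Suc n]"] map_p
    by (simp add: atLeastLessThanSuc_atLeastAtMost del: upt_Suc)
  moreover have "?p ` {1..n} = {1..n}"
    using arg_cong[OF map_p, of set] assms(2)
    by (simp add: atLeastLessThanSuc_atLeastAtMost del: upt_Suc)
  ultimately have "?p permutes {1..n}"
    by (intro bij_imp_permutes) (auto simp: bij_betw_def)
  moreover have "\<pi> = ?p" if "\<pi> permutes {1..n}" "xs = map \<pi> [1..<Suc n]" for \<pi>
  proof
    fix i
    show "\<pi> i = ?p i"
      using that nth_map_upt[of i \<pi>] permutes_not_in[OF that(1)] by (cases "i \<in> {1..n}") auto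
  qed
  ultimately show ?thesis
    using map_p[symmetric] by blast
qed

section \<open>The final deck\<close>

lemma mult_add_less_mult_add_iff:
  fixes k a b r s :: nat
  assumes "r < k" "s < k"
  shows "k * a + r < k * b + s \<longleftrightarrow> a < b \<or> a = b \<and> r < s"
proof (cases a b rule: linorder_cases)
  case less
  then have "k * a + r < k * b"
    using assms(1) mult_le_mono2[of "Suc a" b k] by simp
  then show ?thesis using less by linarith
next
  case greater
  then have "k * b + s < k * a"
    using assms(2) mult_le_mono2[of "Suc b" a k] by simp
  then show ?thesis using greater by linarith
qed simp

text \<open>Card \<open>j\<close> ends above card \<open>i\<close> iff its key is smaller: cards are ordered by their
  option, and cards sharing an odd (top) option appear in reverse order of processing.\<close>

definition deck_key :: "nat \<Rightarrow> (nat \<Rightarrow> nat) \<Rightarrow> nat \<Rightarrow> nat" where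
  "deck_key n c j = (n + 1) * c j + (if odd (c j) then n - j else j)"

text \<open>A card with option \<open>y\<close> ends above a card with option \<open>x\<close> iff
  \<open>y < shelf_threshold x earlier\<close>, where \<open>earlier\<close> says whether the former card was
  processed first.\<close>

definition shelf_threshold :: "nat \<Rightarrow> bool \<Rightarrow> nat" where
  "shelf_threshold x earlier = (if odd x = earlier then x else Suc x)"

lemma deck_key_less_iff:
  assumes "i \<le> n" "j \<le> n"
  shows "deck_key n c j < deck_key n c i \<longleftrightarrow> j \<noteq> i \<and> c j < shelf_threshold (c i) (j < i)"
proof -
  have "deck_key n c j < deck_key n c i \<longleftrightarrow>
      c j < c i \<or> c j = c i \<and> (if odd (c i) then i < j else j < i)"
    unfolding deck_key_def using assms by (subst mult_add_less_mult_add_iff) auto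
  then show ?thesis
    unfolding shelf_threshold_def by auto
qed

lemma shelf_threshold_lower_shelf:
  assumes "shelf_of y < shelf_of x"
  shows "y < shelf_threshold x e"
proof -
  have "y < x"
    using assms div_le_mono[of "x + 1" "y + 1" 2] unfolding shelf_of_def by linarith
  then show ?thesis
    unfolding shelf_threshold_def by simp
qed

lemma shelf_threshold_same_shelf_top:
  "shelf_of x = shelf_of y \<Longrightarrow> odd x \<Longrightarrow> x < shelf_threshold y False"
  unfolding shelf_of_def shelf_threshold_def by presburger

lemma shelf_threshold_same_shelf_bottom:
  "shelf_of x = shelf_of y \<Longrightarrow> even x \<Longrightarrow> y < shelf_threshold x True"
  unfolding shelf_of_def shelf_threshold_def by presburger

definition shelf_piles :: "(nat \<Rightarrow> nat) \<Rightarrow> nat \<Rightarrow> nat \<Rightarrow> nat list" where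
  "shelf_piles c k = fold (place c) [1..<Suc k] (\<lambda>_. [])"

lemma shelf_piles_Suc: "shelf_piles c (Suc k) = place c (Suc k) (shelf_piles c k)"
  unfolding shelf_piles_def by simp

lemma shelf_piles_invariant:
  assumes "k \<le> n"
  shows "set (shelf_piles c k s) = {j \<in> {1..k}. shelf_of (c j) = s} \<and>
    sorted_wrt (\<lambda>a b. deck_key n c a < deck_key n c b) (shelf_piles c k s)"
  using assms
proof (induction k arbitrary: s)
  case 0
  then show ?case by (simp add: shelf_piles_def)
next
  case (Suc k)
  let ?x = "c (Suc k)"
  have IH: "set (shelf_piles c k s) = {j \<in> {1..k}. shelf_of (c j) = s}"
    "sorted_wrt (\<lambda>a b. deck_key n c a < deck_key n c b) (shelf_piles c k s)"
    using Suc by auto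
  have set_Suc: "{j \<in> {1..Suc k}. shelf_of (c j) = s} = (if shelf_of ?x = s
      then insert (Suc k) {j \<in> {1..k}. shelf_of (c j) = s} else {j \<in> {1..k}. shelf_of (c j) = s})"
    by (auto simp: atLeastAtMostSuc_conv)
  have pile: "b \<le> k" "shelf_of (c b) = s" if "b \<in> set (shelf_piles c k s)" for b
    using that IH by auto
  consider "shelf_of ?x \<noteq> s" | "shelf_of ?x = s" "odd ?x" | "shelf_of ?x = s" "even ?x"
    by blast
  then show ?case
  proof cases
    case 1
    then show ?thesis
      using IH set_Suc by (simp add: shelf_piles_Suc place_def)
  next
    case 2
    then have "deck_key n c (Suc k) < deck_key n c b" if "b \<in> set (shelf_piles c k s)" for b
      using pile[OF that] Suc.prems shelf_threshold_same_shelf_top[of ?x "c b"]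
      by (subst deck_key_less_iff) auto
    then show ?thesis
      using IH set_Suc 2 by (simp add: shelf_piles_Suc place_def)
  next
    case 3
    then have "deck_key n c b < deck_key n c (Suc k)" if "b \<in> set (shelf_piles c k s)" for b
      using pile[OF that] Suc.prems shelf_threshold_same_shelf_bottom[of ?x "c b"]
      by (subst deck_key_less_iff) auto
    then show ?thesis
      using IH set_Suc 3 by (simp add: shelf_piles_Suc place_def sorted_wrt_append)
  qed
qed

lemma shelf_deck_eq_concat: "shelf_deck m n c = concat (map (shelf_piles c n) [0..<Suc m])"
  unfolding shelf_deck_def shelf_piles_def Let_def by (rule refl)

lemma sorted_concat_shelf_piles:
  "sorted_wrt (\<lambda>a b. deck_key n c a < deck_key n c b) (concat (map (shelf_piles c n) [0..<k]))"
proof (induction k)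
  case (Suc k)
  have "deck_key n c a < deck_key n c b"
    if "a \<in> set (shelf_piles c n s)" "s < k" "b \<in> set (shelf_piles c n k)" for a b s
    using that shelf_piles_invariant[of n n c] shelf_threshold_lower_shelf[of "c a" "c b"]
    by (subst deck_key_less_iff) auto
  then show ?case
    using Suc.IH shelf_piles_invariant[of n n c k] by (auto simp: sorted_wrt_append)
qed simp

lemma sorted_shelf_deck: "sorted_wrt (\<lambda>a b. deck_key n c a < deck_key n c b) (shelf_deck m n c)"
  unfolding shelf_deck_eq_concat by (rule sorted_concat_shelf_piles)

lemma set_shelf_deck:
  assumes "c \<in> shelf_choices m n"
  shows "set (shelf_deck m n c) = {1..n}"
proof -
  have "shelf_of (c j) < Suc m" if "j \<in> {1..n}" for j
  proof -
    have "c j < 2 * m + 1"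
      using assms that unfolding shelf_choices_def by auto
    then show ?thesis
      unfolding shelf_of_def by linarith
  qed
  moreover have "set (shelf_deck m n c) = (\<Union>s<Suc m. {j \<in> {1..n}. shelf_of (c j) = s})"
    using shelf_piles_invariant[of n n c] by (simp add: shelf_deck_eq_concat atLeast0LessThan del: upt_Suc)
  ultimately show ?thesis
    by blast
qed

definition shelf_perm :: "nat \<Rightarrow> nat \<Rightarrow> (nat \<Rightarrow> nat) \<Rightarrow> nat \<Rightarrow> nat" where
  "shelf_perm m n c i = (if i \<in> {1..n} then shelf_deck m n c ! (i - 1) else i)"

lemma shelf_perm_unique:
  assumes "c \<in> shelf_choices m n"
  shows "{\<pi>. \<pi> permutes {1..n} \<and> shelf_deck m n c = map \<pi> [1..<Suc n]} = {shelf_perm m n c}"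
  unfolding shelf_perm_def
  using permutes_map_upt_eq_singleton sorted_wrt_key_less_imp_distinct[OF sorted_shelf_deck]
    set_shelf_deck[OF assms] by blast

lemma sum_permutes_lazy_shelf:
  "(\<Sum>\<pi> | \<pi> permutes {1..n}. lazy_shelf m n \<pi> * g \<pi>) =
    (\<Sum>c\<in>shelf_choices m n. g (shelf_perm m n c)) / real (2 * m + 1) ^ n"
proof -
  let ?P = "{\<pi>. \<pi> permutes {1..n}}" and ?C = "shelf_choices m n"
  have "finite ?P"
    by (simp add: finite_permutations)
  moreover have "finite ?C"
    by (simp add: shelf_choices_def finite_PiE)
  ultimately have "(\<Sum>\<pi>\<in>?P. \<Sum>c\<in>{c \<in> ?C. shelf_deck m n c = map \<pi> [1..<Suc n]}. g \<pi>) =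
      (\<Sum>c\<in>?C. \<Sum>\<pi>\<in>{\<pi> \<in> ?P. shelf_deck m n c = map \<pi> [1..<Suc n]}. g \<pi>)"
    by (rule sum.swap_restrict)
  also have "\<dots> = (\<Sum>c\<in>?C. g (shelf_perm m n c))"
    using shelf_perm_unique by (intro sum.cong) auto
  finally have "(\<Sum>\<pi>\<in>?P. real (card {c \<in> ?C. shelf_deck m n c = map \<pi> [1..<Suc n]}) * g \<pi>) =
      (\<Sum>c\<in>?C. g (shelf_perm m n c))"
    by simp
  then show ?thesis
    by (simp add: lazy_shelf_def sum_divide_distrib [symmetric] del: upt_Suc)
qed

definition shelf_rank :: "nat \<Rightarrow> (nat \<Rightarrow> nat) \<Rightarrow> nat \<Rightarrow> nat" where
  "shelf_rank n c i = card {j \<in> {1..n} - {i}. c j < shelf_threshold (c i) (j < i)}"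

lemma shelf_deck_nth_eq_iff:
  assumes "c \<in> shelf_choices m n" "i \<in> {1..n}"
  shows "shelf_deck m n c ! (i - 1) = i \<longleftrightarrow> shelf_rank n c i = i - 1"
proof -
  let ?D = "shelf_deck m n c"
  have "distinct ?D"
    by (rule sorted_wrt_key_less_imp_distinct[OF sorted_shelf_deck])
  then have "length ?D = n"
    using distinct_card set_shelf_deck[OF assms(1)] by fastforce
  moreover have "{j \<in> set ?D. deck_key n c j < deck_key n c i} =
      {j \<in> {1..n} - {i}. c j < shelf_threshold (c i) (j < i)}"
    using set_shelf_deck[OF assms(1)] assms(2) deck_key_less_iff[of i n] by auto
  ultimately show ?thesis
    using nth_eq_iff_card_key_less[OF sorted_shelf_deck, of "i - 1"] set_shelf_deck[OF assms(1)]
      assms(2) unfolding shelf_rank_def by auto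
qed

lemma fixed_points_shelf_perm:
  assumes "c \<in> shelf_choices m n"
  shows "fixed_points n (shelf_perm m n c) = card {i \<in> {1..n}. shelf_rank n c i = i - 1}"
  unfolding fixed_points_def shelf_perm_def
  using shelf_deck_nth_eq_iff[OF assms] by (intro arg_cong[where f = card]) auto

section \<open>A diagonal coefficient identity\<close>

lemma pcompose_power: "pcompose (p ^ k) q = pcompose p q ^ k"
  for p q :: "'a::comm_semiring_1 poly"
  by (induction k) (simp_all add: pcompose_mult pcompose_1)

lemma coeff_pcompose_eq_sum:
  fixes p q :: "'a::comm_semiring_1 poly"
  assumes "degree p < n"
  shows "coeff (pcompose p q) k = (\<Sum>d<n. coeff p d * coeff (q ^ d) k)"
proof -
  have "pcompose p q = (\<Sum>d\<le>degree p. [:coeff p d:] * q ^ d)"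
    by (simp add: pcompose_altdef poly_altdef degree_map_poly coeff_map_poly)
  then have "coeff (pcompose p q) k = (\<Sum>d\<le>degree p. coeff p d * coeff (q ^ d) k)"
    by (simp add: coeff_sum)
  also have "\<dots> = (\<Sum>d<n. coeff p d * coeff (q ^ d) k)"
    using assms by (intro sum.mono_neutral_left) (auto simp: coeff_eq_0)
  finally show ?thesis .
qed

lemma sum_homogenized_coeffs_linear_power:
  fixes P R :: "'a::comm_ring_1 poly"
  assumes "d < n"
  shows "(\<Sum>i<n. smult (coeff ([:-1, 1:] ^ d) i) (P ^ i * R ^ (n - 1 - i))) =
    R ^ (n - 1 - d) * (P - R) ^ d"
proof -
  have minus_power: "(- R) ^ k = smult ((- 1) ^ k) (R ^ k)" for k
    by (induction k) (simp_all add: mult_smult_right)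
  have "(\<Sum>i<n. smult (coeff ([:-1, 1:] ^ d) i) (P ^ i * R ^ (n - 1 - i))) =
      (\<Sum>i\<le>d. smult (coeff ([:-1, 1:] ^ d) i) (P ^ i * R ^ (n - 1 - i)))"
    using assms by (intro sum.mono_neutral_right) (auto simp: coeff_eq_0 degree_linear_power)
  also have "\<dots> = (\<Sum>i\<le>d. R ^ (n - 1 - d) * (of_nat (d choose i) * P ^ i * (- R) ^ (d - i)))"
  proof (intro sum.cong refl)
    fix i
    assume "i \<in> {..d}"
    moreover have "R ^ (n - 1 - i) = R ^ (d - i) * R ^ (n - 1 - d)"
      using assms \<open>i \<in> {..d}\<close> by (simp flip: power_add)
    ultimately show "smult (coeff ([:-1, 1:] ^ d) i) (P ^ i * R ^ (n - 1 - i)) =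
        R ^ (n - 1 - d) * (of_nat (d choose i) * P ^ i * (- R) ^ (d - i))"
      by (simp add: coeff_linear_poly_power minus_power of_nat_poly mult_smult_left mult_smult_right mult_ac)
  qed
  also have "\<dots> = R ^ (n - 1 - d) * (P + - R) ^ d"
    by (simp only: binomial_ring sum_distrib_left)
  finally show ?thesis
    by simp
qed

text \<open>Probabilistically: if \<open>X\<^sub>i\<close> is a sum of \<open>i\<close> Bernoulli(\<open>p\<close>) and \<open>n - 1 - i\<close>
  Bernoulli(\<open>q\<close>) variables, then \<open>\<Sum>i<n. P(X\<^sub>i = i) = \<Sum>d<n. (p - q)\<^sup>d\<close>. Substituting
  \<open>Y - 1\<close> for \<open>Y\<close> (Taylor expansion at 1) turns the diagonal sum into a binomial sum.\<close>

lemma sum_diagonal_coeffs_linear_powers: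
  fixes N a b :: "'a::comm_ring_1"
  shows "(\<Sum>i<n. coeff ([:N - a, a:] ^ i * [:N - b, b:] ^ (n - 1 - i)) i) =
    (\<Sum>d<n. N ^ (n - 1 - d) * (a - b) ^ d)"
proof -
  define P R where "P = [:N, a:]" and "R = [:N, b:]"
  have shift: "[:N - a, a:] ^ i * [:N - b, b:] ^ (n - 1 - i) =
      pcompose (P ^ i * R ^ (n - 1 - i)) [:-1, 1:]" for i
    by (simp add: P_def R_def pcompose_mult pcompose_power pcompose_pCons algebra_simps)
  have degree: "degree (P ^ i * R ^ (n - 1 - i)) < n" if "i < n" for i
  proof -
    have "degree (P ^ i * R ^ (n - 1 - i)) \<le> degree (P ^ i) + degree (R ^ (n - 1 - i))"
      by (rule degree_mult_le)
    also have "\<dots> \<le> i + (n - 1 - i)"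
      by (intro add_mono order.trans[OF degree_power_le]) (simp_all add: P_def R_def)
    finally show ?thesis
      using that by linarith
  qed
  have difference_power: "(P - R) ^ d = monom ((a - b) ^ d) d" for d
  proof -
    have "P - R = monom (a - b) 1"
      by (simp add: P_def R_def monom_Suc monom_0)
    then show ?thesis
      by (simp add: monom_power)
  qed
  have coeff_mult_monom_same: "coeff (p * monom c d) d = coeff p 0 * c" for p :: "'a poly" and c d
    using coeff_monom_mult[of c d p d] by (simp add: ac_simps)
  have "(\<Sum>i<n. coeff ([:N - a, a:] ^ i * [:N - b, b:] ^ (n - 1 - i)) i) =
      (\<Sum>i<n. \<Sum>d<n. coeff (P ^ i * R ^ (n - 1 - i)) d * coeff ([:-1, 1:] ^ d) i)"
    unfolding shift by (intro sum.cong refl coeff_pcompose_eq_sum degree) simp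
  also have "\<dots> = (\<Sum>d<n. coeff (\<Sum>i<n. smult (coeff ([:-1, 1:] ^ d) i) (P ^ i * R ^ (n - 1 - i))) d)"
    by (subst sum.swap) (simp add: coeff_sum mult.commute)
  also have "\<dots> = (\<Sum>d<n. coeff (R ^ (n - 1 - d) * (P - R) ^ d) d)"
    by (intro sum.cong refl) (subst sum_homogenized_coeffs_linear_power; simp)
  also have "\<dots> = (\<Sum>d<n. N ^ (n - 1 - d) * (a - b) ^ d)"
    unfolding difference_power coeff_mult_monom_same coeff_0_power by (simp add: R_def)
  finally show ?thesis .
qed

section \<open>Expected number of fixed points\<close>

lemma sum_PiE_power_card_below:
  fixes z :: "'a::comm_semiring_1"
  assumes "finite T" "i \<notin> T" "\<And>x j. x < N \<Longrightarrow> j \<in> T \<Longrightarrow> t x j \<le> N"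
  shows "(\<Sum>c\<in>PiE (insert i T) (\<lambda>_. {..<N}). z ^ card {j \<in> T. c j < t (c i) j}) =
    (\<Sum>x<N. \<Prod>j\<in>T. of_nat (N - t x j) + of_nat (t x j) * z)"
proof -
  let ?A = "\<lambda>_. {..<N}"
  have power_card: "z ^ card {j \<in> T. g j < t x j} = (\<Prod>j\<in>T. if g j < t x j then z else 1)" for g x
    using assms(1) by (simp add: prod.inter_filter [symmetric])
  have count: "(\<Sum>y<N. if y < t x j then z else 1) = of_nat (N - t x j) + of_nat (t x j) * z"
    if "x < N" "j \<in> T" for x j
  proof -
    have "{..<N} \<inter> {y. y < t x j} = {..<t x j}" "{..<N} \<inter> - {y. y < t x j} = {t x j..<N}"
      using assms(3)[OF that] by auto
    then show ?thesis
      by (simp add: sum.If_cases add.commute)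
  qed
  have update: "{j \<in> T. (g(i := x)) j < t ((g(i := x)) i) j} = {j \<in> T. g j < t x j}" for g x
    using assms(2) by auto
  have "(\<Sum>c\<in>PiE (insert i T) ?A. z ^ card {j \<in> T. c j < t (c i) j}) =
      (\<Sum>(x, g)\<in>{..<N} \<times> PiE T ?A. z ^ card {j \<in> T. g j < t x j})"
    unfolding PiE_insert_eq using assms(2)
    by (subst sum.reindex [OF inj_combinator [OF assms(2)]], intro sum.cong refl)
      (clarsimp simp del: fun_upd_apply simp add: update)
  also have "\<dots> = (\<Sum>x<N. \<Sum>g\<in>PiE T ?A. \<Prod>j\<in>T. if g j < t x j then z else 1)"
    by (simp add: sum.cartesian_product [symmetric] power_card)
  also have "\<dots> = (\<Sum>x<N. \<Prod>j\<in>T. \<Sum>y<N. if y < t x j then z else 1)"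
    using assms(1) by (simp add: prod_sum_PiE)
  also have "\<dots> = (\<Sum>x<N. \<Prod>j\<in>T. of_nat (N - t x j) + of_nat (t x j) * z)"
    by (simp add: count)
  finally show ?thesis .
qed

lemma shelf_threshold_le: "x < N \<Longrightarrow> shelf_threshold x e \<le> N"
  unfolding shelf_threshold_def by auto

lemma shelf_threshold_diff: "real (shelf_threshold x True) - real (shelf_threshold x False) = (- 1) ^ x"
  unfolding shelf_threshold_def by auto

lemma sum_card_shelf_rank:
  "(\<Sum>c\<in>PiE {1..n} (\<lambda>_. {..<N}). real (card {i \<in> {1..n}. shelf_rank n c i = i - 1})) =
    (\<Sum>x<N. \<Sum>d<n. real N ^ (n - 1 - d) * (- 1) ^ (x * d))"
proof -
  let ?C = "PiE {1..n} (\<lambda>_. {..<N})"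
  define A where "A x e = [:real N - real (shelf_threshold x e), real (shelf_threshold x e):]" for x e
  have generating_function: "(\<Sum>c\<in>?C. [:0, 1:] ^ shelf_rank n c i) =
      (\<Sum>x<N. A x True ^ (i - 1) * A x False ^ (n - i))" if "i \<in> {1..n}" for i
  proof -
    have "insert i ({1..n} - {i}) = {1..n}"
      using that by auto
    then have "(\<Sum>c\<in>?C. [:0, 1:] ^ shelf_rank n c i) = (\<Sum>c\<in>PiE (insert i ({1..n} - {i})) (\<lambda>_. {..<N}).
        [:0, 1:] ^ card {j \<in> {1..n} - {i}. c j < shelf_threshold (c i) (j < i)})"
      unfolding shelf_rank_def by simp
    also have "\<dots> = (\<Sum>x<N. \<Prod>j\<in>{1..n} - {i}.
        of_nat (N - shelf_threshold x (j < i)) + of_nat (shelf_threshold x (j < i)) * [:0, 1:])"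
      by (rule sum_PiE_power_card_below [where t = "\<lambda>x j. shelf_threshold x (j < i)"])
        (auto intro: shelf_threshold_le)
    also have "\<dots> = (\<Sum>x<N. \<Prod>j\<in>{1..<i} \<union> {i<..n}. A x (j < i))"
      using that shelf_threshold_le by (intro sum.cong prod.cong) (auto simp: A_def of_nat_poly of_nat_diff)
    also have "\<dots> = (\<Sum>x<N. A x True ^ (i - 1) * A x False ^ (n - i))"
      by (subst prod.union_disjoint) auto
    finally show ?thesis .
  qed
  have "(\<Sum>c\<in>?C. real (card {i \<in> {1..n}. shelf_rank n c i = i - 1})) =
      (\<Sum>c\<in>?C. \<Sum>i\<in>{1..n}. coeff ([:0, 1:] ^ shelf_rank n c i) (i - 1))"
  proof -
    have "coeff ([:0, 1:] ^ k) j = (of_bool (k = j) :: real)" for k j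
      by (simp add: monom_altdef [of 1, simplified, symmetric])
    moreover have "real (card {i \<in> {1..n}. P i}) = (\<Sum>i\<in>{1..n}. of_bool (P i))" for P
      by (simp add: Int_def)
    ultimately show ?thesis
      by simp
  qed
  also have "\<dots> = (\<Sum>i\<in>{1..n}. coeff (\<Sum>c\<in>?C. [:0, 1:] ^ shelf_rank n c i) (i - 1))"
    by (subst sum.swap) (simp add: coeff_sum)
  also have "\<dots> = (\<Sum>i\<in>{1..n}. \<Sum>x<N. coeff (A x True ^ (i - 1) * A x False ^ (n - i)) (i - 1))"
    by (intro sum.cong refl) (subst generating_function; simp add: coeff_sum)
  also have "\<dots> = (\<Sum>x<N. \<Sum>i\<in>{1..n}. coeff (A x True ^ (i - 1) * A x False ^ (n - i)) (i - 1))"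
    by (rule sum.swap)
  also have "\<dots> = (\<Sum>x<N. \<Sum>i<n. coeff (A x True ^ i * A x False ^ (n - 1 - i)) i)"
    by (simp add: sum.atLeast1_atMost_eq)
  also have "\<dots> = (\<Sum>x<N. \<Sum>d<n. real N ^ (n - 1 - d) * (- 1) ^ (x * d))"
    unfolding A_def sum_diagonal_coeffs_linear_powers shelf_threshold_diff by (simp add: power_mult)
  finally show ?thesis .
qed

lemma sum_minus_one_power_odd_range:
  "(\<Sum>x<2 * m + 1. (- 1 :: real) ^ (x * d)) = (if even d then real (2 * m + 1) else 1)"
proof (induction m)
  case (Suc m)
  have "{..<2 * Suc m + 1} = insert (2 * m + 2) (insert (2 * m + 1) {..<2 * m + 1})"
    by auto
  with Suc show ?case
    by (auto simp: power_mult)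
qed simp

lemma sum_powers_div_power:
  fixes N :: "'a::field"
  assumes "N \<noteq> 0"
  shows "(\<Sum>d<n. N ^ (n - 1 - d) * (if even d then N else 1)) / N ^ n =
    (\<Sum>d<n. (1 / N) ^ (if even d then d else Suc d))"
  unfolding sum_divide_distrib
proof (intro sum.cong refl)
  fix d
  assume "d \<in> {..<n}"
  then have "n = (n - 1 - d) + Suc d"
    by simp
  then have "N ^ n = N ^ (n - 1 - d) * N ^ Suc d"
    by (metis power_add)
  then show "N ^ (n - 1 - d) * (if even d then N else 1) / N ^ n = (1 / N) ^ (if even d then d else Suc d)"
    using assms by (simp add: power_one_over field_simps)
qed

lemma sum_even_odd_powers_closed_form:
  fixes q :: "'a::comm_semiring_1"
  assumes "n \<ge> 1"
  shows "(\<Sum>d<n. q ^ (if even d then d else Suc d)) =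
    (if odd n then 1 + 2 * (\<Sum>k=1..(n - 1) div 2. q ^ (2 * k))
     else 1 + 2 * (\<Sum>k=1..n div 2 - 1. q ^ (2 * k)) + q ^ n)"
proof -
  let ?f = "\<lambda>d. q ^ (if even d then d else Suc d)"
  have odd_length: "(\<Sum>d<2 * r + 1. ?f d) = 1 + 2 * (\<Sum>k=1..r. q ^ (2 * k))" for r
  proof (induction r)
    case (Suc r)
    have "(\<Sum>d<2 * Suc r + 1. ?f d) = (\<Sum>d<2 * r + 1. ?f d) + ?f (2 * r + 1) + ?f (2 * r + 2)"
      by (simp add: add.assoc)
    then show ?case
      using Suc by (simp add: mult_2 algebra_simps)
  qed simp
  show ?thesis
  proof (cases "odd n")
    case True
    then obtain r where "n = 2 * r + 1"
      by (rule oddE)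
    then show ?thesis
      using odd_length by simp
  next
    case False
    define r where "r = n div 2 - 1"
    have n: "n = 2 * r + 2"
      using False assms unfolding r_def by presburger
    have "(\<Sum>d<2 * r + 2. ?f d) = (\<Sum>d<2 * r + 1. ?f d) + ?f (2 * r + 1)"
      by simp
    with n show ?thesis
      using odd_length by simp
  qed
qed

theorem proposition5p2:
  fixes n m :: nat
  assumes "n \<ge> 1" and "m \<ge> 1"
  shows "(\<Sum>\<pi> | \<pi> permutes {1..n}. lazy_shelf m n \<pi> * real (fixed_points n \<pi>)) =
    (if odd n
     then 1 + 2 * (\<Sum>k=1..(n-1) div 2. 1 / real (2*m+1) ^ (2*k))
     else 1 + 2 * (\<Sum>k=1..n div 2 - 1. 1 / real (2*m+1) ^ (2*k)) + 1 / real (2*m+1) ^ n)"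
proof -
  define N where "N = 2 * m + 1"
  have "(\<Sum>\<pi> | \<pi> permutes {1..n}. lazy_shelf m n \<pi> * real (fixed_points n \<pi>)) =
      (\<Sum>c\<in>PiE {1..n} (\<lambda>_. {..<N}). real (card {i \<in> {1..n}. shelf_rank n c i = i - 1})) / real N ^ n"
    unfolding sum_permutes_lazy_shelf N_def
    by (simp add: fixed_points_shelf_perm shelf_choices_def cong: sum.cong)
  also have "\<dots> = (\<Sum>d<n. real N ^ (n - 1 - d) * (if even d then real N else 1)) / real N ^ n"
  proof -
    have "(\<Sum>x<N. (- 1 :: real) ^ (x * d)) = (if even d then real N else 1)" for d
      unfolding N_def by (rule sum_minus_one_power_odd_range)
    then show ?thesis
      unfolding sum_card_shelf_rank by (subst sum.swap) (simp flip: sum_distrib_left)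
  qed
  also have "\<dots> = (\<Sum>d<n. (1 / real N) ^ (if even d then d else Suc d))"
    by (rule sum_powers_div_power) (simp add: N_def)
  also have "\<dots> = (if odd n then 1 + 2 * (\<Sum>k=1..(n - 1) div 2. (1 / real N) ^ (2 * k))
      else 1 + 2 * (\<Sum>k=1..n div 2 - 1. (1 / real N) ^ (2 * k)) + (1 / real N) ^ n)"
    by (rule sum_even_odd_powers_closed_form [OF assms(1)])
  finally show ?thesis
    by (simp add: N_def power_one_over)
qed

end
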